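(* Let $\mathbf{P}$ be a poset and let $\mathcal{A},\mathcal{B},\mathcal{C}$ be $\mathbf{P}$-indexed barcodes. Let $M:\mathcal{A}\nrightarrow\mathcal{B}$ and $N:\mathcal{B}\nrightarrow\mathcal{C}$ be overlap matchings, and let $(\alpha,\gamma)\in N\circ M$, where \[N\circ M=\{(\alpha,\gamma)\in \mathrm{Rep}(\mathcal{A})\times\mathrm{Rep}(\mathcal{C}) : \exists\,\beta\ \text{with}\ (\alpha,\beta)\in M,\ (\beta,\gamma)\in N,\ \text{and}\ \mathcal{A}(\alpha)\cap\mathcal{C}(\gamma)\neq\emptyset\}.\] Then there exists $\beta\in\mathrm{Rep}(\mathcal{B})$ with $(\alpha,\beta)\in M$ and $(\beta,\gamma)\in N$ such that \[\mathcal{A}(\alpha)\cap\mathcal{C}(\gamma)\subseteq\mathcal{B}(\beta).\]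
   Context: A subset $S$ of a poset $\mathbf{P}$ is convex if $b,c\in S$ and $b\le t\le c$ imply $t\in S$. An interval in $\mathbf{P}$ is a nonempty convex subset that is connected as a full subcategory (i.e. any two elements are joined by a finite zigzag of comparable elements within it). Let $\mathcal{I}_{\mathbf{P}}$ be the set of intervals. A $\mathbf{P}$-indexed barcode is a function $\mathcal{B}:\mathrm{Rep}(\mathcal{B})\to\mathcal{I}_{\mathbf{P}}$ from a set $\mathrm{Rep}(\mathcal{B})$ of "bars". A matching $M:A\nrightarrow B$ between sets is a relation $M\subseteq A\times B$ such that each $a$ is related to at most one $b$ and each $b$ to at most one $a$. A barcode matching $M:\mathcal{A}\nrightarrow\mathcal{B}$ is a matching $M\subseteq\mathrm{Rep}(\mathcal{A})\times\mathrm{Rep}(\mathcal{B})$ with $\mathcal{A}(\alpha)\cap\mathcal{B}(\beta)\neq\emptyset$ for all $(\alpha,\beta)\in M$. For intervals $I,J$: $J$ bounds $I$ below if there is $a\in J$ with $a\le t$ for all $t\in I$; $I$ bounds $J$ above if there is $d\in I$ with $t\le d$ for all $t\in J$. $I$ overlaps $J$ above if $I\cap J\neq\emptyset$, $J$ bounds $I$ below, and $I$ bounds $J$ above. A barcode matching $M$ is an overlap matching if $\mathcal{A}(\alpha)$ overlaps $\mathcal{B}(\beta)$ above for all $(\alpha,\beta)\in M$. *)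

theory Defs
  imports Main
begin

text \<open>The poset P is the universe of a type of class order.\<close>

definition convex_set :: "'p::order set \<Rightarrow> bool" where
  "convex_set S \<longleftrightarrow> (\<forall>b c t. b \<in> S \<and> c \<in> S \<and> b \<le> t \<and> t \<le> c \<longrightarrow> t \<in> S)"

definition zigzag_connected :: "'p::order set \<Rightarrow> bool" where
  "zigzag_connected S \<longleftrightarrow>
     (\<forall>x\<in>S. \<forall>y\<in>S. (\<lambda>u v. u \<in> S \<and> v \<in> S \<and> (u \<le> v \<or> v \<le> u))\<^sup>*\<^sup>* x y)"

definition is_interval :: "'p::order set \<Rightarrow> bool" where
  "is_interval I \<longleftrightarrow> I \<noteq> {} \<and> convex_set I \<and> zigzag_connected I"

definition is_barcode :: "'a set \<Rightarrow> ('a \<Rightarrow> 'p::order set) \<Rightarrow> bool" where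
  "is_barcode R B \<longleftrightarrow> (\<forall>r\<in>R. is_interval (B r))"

definition is_matching :: "'a set \<Rightarrow> 'b set \<Rightarrow> ('a \<times> 'b) set \<Rightarrow> bool" where
  "is_matching X Y M \<longleftrightarrow> M \<subseteq> X \<times> Y \<and>
     (\<forall>a b b'. (a, b) \<in> M \<and> (a, b') \<in> M \<longrightarrow> b = b') \<and>
     (\<forall>a a' b. (a, b) \<in> M \<and> (a', b) \<in> M \<longrightarrow> a = a')"

definition barcode_matching ::
  "'a set \<Rightarrow> ('a \<Rightarrow> 'p::order set) \<Rightarrow> 'b set \<Rightarrow> ('b \<Rightarrow> 'p set) \<Rightarrow> ('a \<times> 'b) set \<Rightarrow> bool" where
  "barcode_matching RA A RB B M \<longleftrightarrow> is_matching RA RB M \<and>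
     (\<forall>(a, b) \<in> M. A a \<inter> B b \<noteq> {})"

definition bounds_below :: "'p::order set \<Rightarrow> 'p set \<Rightarrow> bool" where
  "bounds_below J I \<longleftrightarrow> (\<exists>a\<in>J. \<forall>t\<in>I. a \<le> t)"

definition bounds_above :: "'p::order set \<Rightarrow> 'p set \<Rightarrow> bool" where
  "bounds_above I J \<longleftrightarrow> (\<exists>d\<in>I. \<forall>t\<in>J. t \<le> d)"

definition overlaps_above :: "'p::order set \<Rightarrow> 'p set \<Rightarrow> bool" where
  "overlaps_above I J \<longleftrightarrow> I \<inter> J \<noteq> {} \<and> bounds_below J I \<and> bounds_above I J"

definition overlap_matching ::
  "'a set \<Rightarrow> ('a \<Rightarrow> 'p::order set) \<Rightarrow> 'b set \<Rightarrow> ('b \<Rightarrow> 'p set) \<Rightarrow> ('a \<times> 'b) set \<Rightarrow> bool" where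
  "overlap_matching RA A RB B M \<longleftrightarrow> barcode_matching RA A RB B M \<and>
     (\<forall>(a, b) \<in> M. overlaps_above (A a) (B b))"

definition matching_comp ::
  "'a set \<Rightarrow> ('a \<Rightarrow> 'p set) \<Rightarrow> 'c set \<Rightarrow> ('c \<Rightarrow> 'p set) \<Rightarrow>
   ('b \<times> 'c) set \<Rightarrow> ('a \<times> 'b) set \<Rightarrow> ('a \<times> 'c) set" where
  "matching_comp RA A RC C N M = {(a, c). a \<in> RA \<and> c \<in> RC \<and>
     (\<exists>b. (a, b) \<in> M \<and> (b, c) \<in> N \<and> A a \<inter> C c \<noteq> {})}"

end

theory Submission
  imports Defs
begin

text \<open>If \<open>(\<alpha>, \<beta>) \<in> M\<close> and \<open>(\<beta>, \<gamma>) \<in> N\<close>, then \<open>B \<beta>\<close> contains a lower bound of \<open>A \<alpha>\<close>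
  and an upper bound of \<open>C \<gamma>\<close>. Every point of \<open>A \<alpha> \<inter> C \<gamma>\<close> lies between these two,
  so it lies in \<open>B \<beta>\<close> by convexity.\<close>

lemma convex_set_contains_inter:
  assumes "convex_set J" and "bounds_below J I" and "bounds_above J K"
  shows "I \<inter> K \<subseteq> J"
proof
  fix t assume t: "t \<in> I \<inter> K"
  obtain lo where "lo \<in> J" "\<forall>s\<in>I. lo \<le> s"
    using assms(2) unfolding bounds_below_def by blast
  moreover obtain hi where "hi \<in> J" "\<forall>s\<in>K. s \<le> hi"
    using assms(3) unfolding bounds_above_def by blast
  ultimately show "t \<in> J"
    using assms(1) t unfolding convex_set_def by blast
qed

lemma overlap_matchingD:
  assumes "overlap_matching RA A RB B M" and "(a, b) \<in> M"
  shows "b \<in> RB" "overlaps_above (A a) (B b)"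
  using assms
  unfolding overlap_matching_def barcode_matching_def is_matching_def by blast+

lemma matching_compE:
  assumes "(a, c) \<in> matching_comp RA A RC C N M"
  obtains b where "(a, b) \<in> M" and "(b, c) \<in> N"
  using assms unfolding matching_comp_def by blast

lemma is_barcode_convex_set:
  assumes "is_barcode R B" and "r \<in> R"
  shows "convex_set (B r)"
  using assms unfolding is_barcode_def is_interval_def by blast

theorem lemma2p3:
  fixes RA :: "'a set" and A :: "'a \<Rightarrow> 'p::order set"
    and RB :: "'b set" and B :: "'b \<Rightarrow> 'p set"
    and RC :: "'c set" and C :: "'c \<Rightarrow> 'p set"
    and M :: "('a \<times> 'b) set" and N :: "('b \<times> 'c) set"
  assumes "is_barcode RA A" and "is_barcode RB B" and "is_barcode RC C"
    and "overlap_matching RA A RB B M" and "overlap_matching RB B RC C N"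
    and "(\<alpha>, \<gamma>) \<in> matching_comp RA A RC C N M"
  shows "\<exists>\<beta>\<in>RB. (\<alpha>, \<beta>) \<in> M \<and> (\<beta>, \<gamma>) \<in> N \<and> A \<alpha> \<inter> C \<gamma> \<subseteq> B \<beta>"
proof -
  obtain \<beta> where M_\<alpha>\<beta>: "(\<alpha>, \<beta>) \<in> M" and N_\<beta>\<gamma>: "(\<beta>, \<gamma>) \<in> N"
    using assms(6) by (rule matching_compE)
  have \<beta>: "\<beta> \<in> RB"
    using overlap_matchingD(1)[OF assms(4) M_\<alpha>\<beta>] .
  have "bounds_below (B \<beta>) (A \<alpha>)"
    using overlap_matchingD(2)[OF assms(4) M_\<alpha>\<beta>] unfolding overlaps_above_def by blast
  moreover have "bounds_above (B \<beta>) (C \<gamma>)"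
    using overlap_matchingD(2)[OF assms(5) N_\<beta>\<gamma>] unfolding overlaps_above_def by blast
  ultimately have "A \<alpha> \<inter> C \<gamma> \<subseteq> B \<beta>"
    using convex_set_contains_inter is_barcode_convex_set[OF assms(2) \<beta>] by blast
  with \<beta> M_\<alpha>\<beta> N_\<beta>\<gamma> show ?thesis by blast
qed

end
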